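(* Let $(e_n)$ be a uniformly quasi-greedy basic sequence in a Banach lattice $X$ with uniform quasi-greedy constant $C^\vee_{qg}$. Then: (i) for any distinct indices $n_1,\dots,n_m$, $\big\|\bigvee_{k=1}^m\big|\sum_{i=1}^k e_{n_i}\big|\big\|\le C^\vee_{qg}\big\|\sum_{i=1}^m e_{n_i}\big\|$; (ii) for any distinct indices $n_1,\dots,n_m$ and any signs $\varepsilon_i\in\{\pm1\}$, $(2C^\vee_{qg})^{-1}\big\|\bigvee_{k=1}^m\big|\sum_{i=1}^k e_{n_i}\big|\big\|\le\big\|\sum_{i=1}^m\varepsilon_ie_{n_i}\big\|\le\big\|\bigvee_{k=1}^m\big|\sum_{i=1}^k\varepsilon_ie_{n_i}\big|\big\|\le 2C^\vee_{qg}\big\|\sum_{i=1}^m e_{n_i}\big\|$.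
   Context: Let $(e_n)$ be a semi-normalized basic sequence in a Banach lattice $X$ with span $E$ and biorthogonal functionals $e_n^*$. For $x\in E$, the natural greedy ordering $\rho$ of $x$ is the injective map $\mathbb{N}\to\mathbb{N}$ whose range contains $\{n:e_n^*(x)\ne0\}$ and which lists indices by non-increasing $|e_n^*(x)|$, ties broken by increasing index; $\mathcal{G}_m(x)=\sum_{n=1}^m e^*_{\rho(n)}(x)e_{\rho(n)}$ and $\mathcal{G}^\vee_m(x)=\bigvee_{n=1}^m|\mathcal{G}_n(x)|$. The sequence is uniformly quasi-greedy if $C^\vee_{qg}:=\sup_m\sup_{x\in E,\|x\|=1}\|\mathcal{G}^\vee_m(x)\|<\infty$; $C^\vee_{qg}$ is the uniform quasi-greedy constant. (Equivalently, $\sup_m\|G^\vee_{\pi,m}(x)\|\le C^\vee_{qg}\|x\|$ for every greedy ordering $\pi$, where a greedy ordering is any injective $\pi$ whose range contains the support and with $|e^*_{\pi(n)}(x)|$ non-increasing, $G^\vee_{\pi,m}(x)=\bigvee_{n\le m}|\sum_{k\le n}e^*_{\pi(k)}(x)e_{\pi(k)}|$.) *)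

theory Defs
  imports "HOL-Analysis.Analysis"
begin

definition lat_abs :: "'a::{uminus, sup} \<Rightarrow> 'a" where
  "lat_abs x = sup x (- x)"

class banach_lattice = banach + ordered_real_vector + lattice +
  assumes lattice_norm: "sup x (- x) \<le> sup y (- y) \<Longrightarrow> norm x \<le> norm y"

text \<open>Join of the absolute values: abs_join f m = |f 1| \<or> ... \<or> |f m| (and 0 for m = 0;
  since absolute values are nonnegative, joining with 0 does not change the value for m \<ge> 1).\<close>
primrec abs_join :: "(nat \<Rightarrow> 'a::banach_lattice) \<Rightarrow> nat \<Rightarrow> 'a" where
  "abs_join f 0 = 0"
| "abs_join f (Suc k) = sup (abs_join f k) (lat_abs (f (Suc k)))"

definition clspan :: "(nat \<Rightarrow> 'a::real_normed_vector) \<Rightarrow> 'a set" where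
  "clspan e = closure (span (range e))"

definition basic_sequence :: "(nat \<Rightarrow> 'a::real_normed_vector) \<Rightarrow> bool" where
  "basic_sequence e \<longleftrightarrow> (\<forall>x \<in> clspan e. \<exists>!a. (\<lambda>n. a n *\<^sub>R e n) sums x)"

definition semi_normalized :: "(nat \<Rightarrow> 'a::real_normed_vector) \<Rightarrow> bool" where
  "semi_normalized e \<longleftrightarrow> (\<exists>c d. 0 < c \<and> (\<forall>n. c \<le> norm (e n) \<and> norm (e n) \<le> d))"

definition coef :: "(nat \<Rightarrow> 'a::real_normed_vector) \<Rightarrow> nat \<Rightarrow> 'a \<Rightarrow> real" where
  "coef e k x = (THE a. (\<lambda>n. a n *\<^sub>R e n) sums x) k"

definition natural_greedy_ordering ::
    "(nat \<Rightarrow> 'a::real_normed_vector) \<Rightarrow> 'a \<Rightarrow> (nat \<Rightarrow> nat) \<Rightarrow> bool" where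
  "natural_greedy_ordering e x \<rho> \<longleftrightarrow>
     inj \<rho> \<and> {n. coef e n x \<noteq> 0} \<subseteq> range \<rho> \<and>
     (\<forall>i j. i < j \<longrightarrow>
        \<bar>coef e (\<rho> i) x\<bar> > \<bar>coef e (\<rho> j) x\<bar> \<or>
        (\<bar>coef e (\<rho> i) x\<bar> = \<bar>coef e (\<rho> j) x\<bar> \<and> \<rho> i < \<rho> j))"

definition greedy_sum :: "(nat \<Rightarrow> 'a::real_normed_vector) \<Rightarrow> (nat \<Rightarrow> nat) \<Rightarrow> nat \<Rightarrow> 'a \<Rightarrow> 'a" where
  "greedy_sum e \<rho> m x = (\<Sum>n<m. coef e (\<rho> n) x *\<^sub>R e (\<rho> n))"

definition greedy_max :: "(nat \<Rightarrow> 'a::banach_lattice) \<Rightarrow> (nat \<Rightarrow> nat) \<Rightarrow> nat \<Rightarrow> 'a \<Rightarrow> 'a" where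
  "greedy_max e \<rho> m x = abs_join (\<lambda>n. greedy_sum e \<rho> n x) m"

definition uqg_bound :: "(nat \<Rightarrow> 'a::banach_lattice) \<Rightarrow> real \<Rightarrow> bool" where
  "uqg_bound e C \<longleftrightarrow> (\<forall>x \<in> clspan e. \<forall>\<rho> m. natural_greedy_ordering e x \<rho> \<longrightarrow>
       norm (greedy_max e \<rho> m x) \<le> C * norm x)"

definition uqg_constant :: "(nat \<Rightarrow> 'a::banach_lattice) \<Rightarrow> real" where
  "uqg_constant e = Sup {norm (greedy_max e \<rho> m x) | x \<rho> m.
      x \<in> clspan e \<and> norm x = 1 \<and> natural_greedy_ordering e x \<rho>}"

end

theory Submission
  imports Defs
begin

(* If x = \<Sum>k<M. a k *\<^sub>R e (\<sigma> k) has nonzero coefficients of strictly decreasing modulus, the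
   natural greedy ordering of x starts with \<sigma>, so the partial sums of x along \<sigma> are greedy sums
   and the uniform quasi-greedy bound controls the join of their absolute values. Coefficients of
   modulus one are reached by perturbing them to (1 + (M - k) d) * s k and letting d \<rightarrow> 0, since
   joins of absolute values depend continuously on their arguments. Listing first the indices of
   a set Q and then the remaining ones shows that the partial sums of the Q-part of a sum are
   among the partial sums of this reordering. Finally, with Q = {i. v i = w i}, every partial sum
   of \<Sum>i. v i *\<^sub>R e (n i) is the difference of partial sums of the Q-part and of the complementary
   part of \<Sum>i. w i *\<^sub>R e (n i), which costs the factor 2. *)

section \<open>Absolute values and joins in Banach lattices\<close>

lemma lat_abs_ge:
  fixes x :: "'a::banach_lattice"
  shows "x \<le> lat_abs x" and "- x \<le> lat_abs x"
  by (simp_all add: lat_abs_def)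

lemma lat_abs_leI:
  fixes x :: "'a::banach_lattice"
  shows "x \<le> u \<Longrightarrow> - x \<le> u \<Longrightarrow> lat_abs x \<le> u"
  by (simp add: lat_abs_def)

lemma lat_abs_nonneg:
  fixes x :: "'a::banach_lattice"
  shows "0 \<le> lat_abs x"
proof -
  have "0 \<le> lat_abs x + lat_abs x"
    using add_mono[OF lat_abs_ge] by (metis right_minus)
  then have "0 \<le> (1/2::real) *\<^sub>R (lat_abs x + lat_abs x)"
    by (intro scaleR_nonneg_nonneg) simp_all
  then show ?thesis
    by (simp only: scaleR_half_double)
qed

lemma lat_abs_eq_self:
  fixes x :: "'a::banach_lattice"
  shows "0 \<le> x \<Longrightarrow> lat_abs x = x"
  unfolding lat_abs_def by (metis neg_le_0_iff_le order.trans sup_absorb1)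

lemma lat_abs_minus [simp]:
  fixes x :: "'a::banach_lattice"
  shows "lat_abs (- x) = lat_abs x"
  by (simp add: lat_abs_def sup.commute)

lemma lat_abs_diff_le:
  fixes x y :: "'a::banach_lattice"
  assumes "lat_abs x \<le> u" and "lat_abs y \<le> v"
  shows "lat_abs (x - y) \<le> u + v"
proof (rule lat_abs_leI)
  have "x + - y \<le> lat_abs x + lat_abs y" and "- x + y \<le> lat_abs x + lat_abs y"
    by (intro add_mono lat_abs_ge)+
  then show "x - y \<le> u + v" and "- (x - y) \<le> u + v"
    using add_mono[OF assms] by (auto simp: add.commute)
qed

lemma norm_mono_nonneg:
  fixes x y :: "'a::banach_lattice"
  assumes "0 \<le> x" and "x \<le> y"
  shows "norm x \<le> norm y"
proof (rule lattice_norm)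
  have "- x \<le> y"
    using assms by (meson neg_le_0_iff_le order.trans)
  then show "sup x (- x) \<le> sup y (- y)"
    using assms(2) by (simp add: le_supI1)
qed

lemma norm_lat_abs [simp]:
  fixes x :: "'a::banach_lattice"
  shows "norm (lat_abs x) = norm x"
proof -
  have "sup (lat_abs x) (- lat_abs x) = sup x (- x)"
    using lat_abs_eq_self[OF lat_abs_nonneg, of x] by (simp add: lat_abs_def)
  then show ?thesis
    by (metis lattice_norm order.refl antisym)
qed

lemma norm_le_if_lat_abs_le:
  fixes x y :: "'a::banach_lattice"
  shows "lat_abs x \<le> y \<Longrightarrow> norm x \<le> norm y"
  by (metis lat_abs_nonneg norm_lat_abs norm_mono_nonneg)

lemma lat_abs_sup_diff_le:
  fixes a b c d :: "'a::banach_lattice"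
  shows "lat_abs (sup a b - sup c d) \<le> lat_abs (a - c) + lat_abs (b - d)"
proof -
  have upper: "sup a b - sup c d \<le> lat_abs (a - c) + lat_abs (b - d)" for a b c d :: 'a
  proof -
    have "a - c \<le> lat_abs (a - c) + lat_abs (b - d)" and "b - d \<le> lat_abs (a - c) + lat_abs (b - d)"
      by (simp_all add: add_increasing add_increasing2 lat_abs_ge lat_abs_nonneg)
    then have "a \<le> sup c d + (lat_abs (a - c) + lat_abs (b - d))"
      and "b \<le> sup c d + (lat_abs (a - c) + lat_abs (b - d))"
      by (simp_all add: diff_le_eq add.commute add_increasing2 le_supI1 le_supI2
          order.trans[OF _ add_right_mono])
    then show ?thesis
      by (simp add: diff_le_eq add.commute)
  qed
  show ?thesis
  proof (rule lat_abs_leI)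
    show "sup a b - sup c d \<le> lat_abs (a - c) + lat_abs (b - d)"
      by (rule upper)
    show "- (sup a b - sup c d) \<le> lat_abs (a - c) + lat_abs (b - d)"
      using upper[of c d a b] by (metis lat_abs_minus minus_diff_eq)
  qed
qed

lemma norm_sup_diff_le:
  fixes a b c d :: "'a::banach_lattice"
  shows "norm (sup a b - sup c d) \<le> norm (a - c) + norm (b - d)"
proof -
  have "norm (sup a b - sup c d) \<le> norm (lat_abs (a - c) + lat_abs (b - d))"
    by (rule norm_le_if_lat_abs_le[OF lat_abs_sup_diff_le])
  also have "\<dots> \<le> norm (a - c) + norm (b - d)"
    by (metis norm_lat_abs norm_triangle_ineq)
  finally show ?thesis .
qed

lemma tendsto_lattice_sup [tendsto_intros]:
  fixes f g :: "'b \<Rightarrow> 'a::banach_lattice"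
  assumes "(f \<longlongrightarrow> a) F" and "(g \<longlongrightarrow> b) F"
  shows "((\<lambda>x. sup (f x) (g x)) \<longlongrightarrow> sup a b) F"
proof -
  have "((\<lambda>x. norm (f x - a) + norm (g x - b)) \<longlongrightarrow> 0) F"
    using assms by (intro tendsto_add_zero tendsto_norm_zero LIM_zero)
  then have "((\<lambda>x. sup (f x) (g x) - sup a b) \<longlongrightarrow> 0) F"
    by (rule Lim_null_comparison[rotated]) (simp add: norm_sup_diff_le)
  then show ?thesis
    by (rule LIM_zero_cancel)
qed

lemma tendsto_lat_abs [tendsto_intros]:
  fixes f :: "'b \<Rightarrow> 'a::banach_lattice"
  shows "(f \<longlongrightarrow> a) F \<Longrightarrow> ((\<lambda>x. lat_abs (f x)) \<longlongrightarrow> lat_abs a) F"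
  unfolding lat_abs_def by (intro tendsto_intros)

lemma scaleR_sup:
  fixes x y :: "'a::banach_lattice"
  assumes "0 \<le> c"
  shows "c *\<^sub>R sup x y = sup (c *\<^sub>R x) (c *\<^sub>R y)"
proof (cases "c = 0")
  case False
  with assms have c: "0 < c" by simp
  show ?thesis
  proof (rule antisym)
    have "inverse c *\<^sub>R (c *\<^sub>R z) \<le> inverse c *\<^sub>R sup (c *\<^sub>R x) (c *\<^sub>R y)"
      if "z = x \<or> z = y" for z
      using that c by (intro scaleR_left_mono) auto
    then have "sup x y \<le> inverse c *\<^sub>R sup (c *\<^sub>R x) (c *\<^sub>R y)"
      using c by simp
    then have "c *\<^sub>R sup x y \<le> c *\<^sub>R (inverse c *\<^sub>R sup (c *\<^sub>R x) (c *\<^sub>R y))"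
      using assms by (rule scaleR_left_mono)
    then show "c *\<^sub>R sup x y \<le> sup (c *\<^sub>R x) (c *\<^sub>R y)"
      using c by simp
  qed (simp add: assms scaleR_left_mono)
qed simp

lemma lat_abs_scaleR:
  fixes x :: "'a::banach_lattice"
  shows "0 \<le> c \<Longrightarrow> lat_abs (c *\<^sub>R x) = c *\<^sub>R lat_abs x"
  by (simp add: lat_abs_def scaleR_sup)

lemma abs_join_nonneg: "0 \<le> abs_join f m"
  by (induction m) (simp_all add: le_supI1)

lemma abs_join_upper: "k \<in> {1..m} \<Longrightarrow> lat_abs (f k) \<le> abs_join f m"
proof (induction m)
  case (Suc m)
  then show ?case
    by (cases "k = Suc m") (auto intro: le_supI1 simp: le_Suc_eq)
qed simp

lemma abs_join_least: "(\<And>k. k \<in> {1..m} \<Longrightarrow> lat_abs (f k) \<le> u) \<Longrightarrow> 0 \<le> u \<Longrightarrow> abs_join f m \<le> u"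
  by (induction m) auto

lemma abs_join_cong: "(\<And>k. k \<in> {1..m} \<Longrightarrow> f k = g k) \<Longrightarrow> abs_join f m = abs_join g m"
  by (induction m) auto

lemma abs_join_scaleR: "0 \<le> c \<Longrightarrow> abs_join (\<lambda>k. c *\<^sub>R f k) m = c *\<^sub>R abs_join f m"
  by (induction m) (simp_all add: lat_abs_scaleR scaleR_sup)

lemma tendsto_abs_join [tendsto_intros]:
  assumes "\<And>k. ((\<lambda>x. f x k) \<longlongrightarrow> g k) F"
  shows "((\<lambda>x. abs_join (f x) m) \<longlongrightarrow> abs_join g m) F"
  by (induction m) (auto intro!: assms tendsto_lattice_sup tendsto_lat_abs)

section \<open>Coefficients and greedy orderings\<close>

lemma sum_in_clspan: "(\<Sum>i\<in>S. c i *\<^sub>R e (\<sigma> i)) \<in> clspan e"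
  unfolding clspan_def by (rule closure_subset[THEN subsetD]) (intro span_sum span_scale span_base; simp)

lemma scaleR_in_clspan:
  assumes "x \<in> clspan e"
  shows "c *\<^sub>R x \<in> clspan e"
proof -
  have "c *\<^sub>R x \<in> (*\<^sub>R) c ` closure (span (range e))"
    using assms unfolding clspan_def by blast
  also have "\<dots> = closure ((*\<^sub>R) c ` span (range e))"
    by (rule closure_scaleR)
  also have "\<dots> \<subseteq> clspan e"
    unfolding clspan_def by (intro closure_mono) (auto intro: span_scale)
  finally show ?thesis .
qed

lemma coef_eqI:
  assumes "basic_sequence e" and "x \<in> clspan e" and "(\<lambda>n. a n *\<^sub>R e n) sums x"
  shows "coef e k x = a k"
proof -
  have "\<exists>!a. (\<lambda>n. a n *\<^sub>R e n) sums x"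
    using assms(1,2) unfolding basic_sequence_def by blast
  then have "(THE a. (\<lambda>n. a n *\<^sub>R e n) sums x) = a"
    using assms(3) by (intro the1_equality)
  then show ?thesis
    by (simp add: coef_def)
qed

lemma coef_sums:
  assumes "basic_sequence e" and "x \<in> clspan e"
  shows "(\<lambda>n. coef e n x *\<^sub>R e n) sums x"
proof -
  have "\<exists>!a. (\<lambda>n. a n *\<^sub>R e n) sums x"
    using assms unfolding basic_sequence_def by blast
  then show ?thesis
    unfolding coef_def by (rule theI')
qed

lemma coef_scaleR:
  assumes "basic_sequence e" and "x \<in> clspan e"
  shows "coef e k (c *\<^sub>R x) = c * coef e k x"
  using sums_scaleR_right[OF coef_sums[OF assms], of c]
  by (intro coef_eqI[OF assms(1) scaleR_in_clspan[OF assms(2)]]) simp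

lemma coef_sum:
  assumes "basic_sequence e" and "finite S"
  shows "coef e k (\<Sum>i\<in>S. c i *\<^sub>R e i) = (if k \<in> S then c k else 0)"
proof (rule coef_eqI[OF assms(1)])
  show "(\<Sum>i\<in>S. c i *\<^sub>R e i) \<in> clspan e"
    using sum_in_clspan[where \<sigma> = id] by simp
  have "(\<lambda>n. (if n \<in> S then c n else 0) *\<^sub>R e n) sums (\<Sum>n\<in>S. (if n \<in> S then c n else 0) *\<^sub>R e n)"
    using assms(2) by (rule sums_finite) simp
  then show "(\<lambda>n. (if n \<in> S then c n else 0) *\<^sub>R e n) sums (\<Sum>i\<in>S. c i *\<^sub>R e i)"
    by (simp cong: sum.cong)
qed

lemma coef_sum_reindex:
  fixes \<sigma> :: "nat \<Rightarrow> nat"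
  assumes "basic_sequence e" and "inj_on \<sigma> {..<M}"
  shows "coef e j (\<Sum>k<M. a k *\<^sub>R e (\<sigma> k)) =
    (if j \<in> \<sigma> ` {..<M} then a (the_inv_into {..<M} \<sigma> j) else 0)"
proof -
  have "(\<Sum>k<M. a k *\<^sub>R e (\<sigma> k)) = (\<Sum>i\<in>\<sigma> ` {..<M}. a (the_inv_into {..<M} \<sigma> i) *\<^sub>R e i)"
    using assms(2) by (simp add: sum.reindex the_inv_into_f_f)
  moreover have "coef e j (\<Sum>i\<in>\<sigma> ` {..<M}. a (the_inv_into {..<M} \<sigma> i) *\<^sub>R e i) =
      (if j \<in> \<sigma> ` {..<M} then a (the_inv_into {..<M} \<sigma> j) else 0)"
    by (rule coef_sum[OF assms(1)]) simp
  ultimately show ?thesis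
    by (simp only:)
qed

definition greedy_extension :: "(nat \<Rightarrow> nat) \<Rightarrow> nat \<Rightarrow> nat \<Rightarrow> nat" where
  "greedy_extension \<sigma> M i = (if i < M then \<sigma> i else enumerate (- \<sigma> ` {..<M}) (i - M))"

lemma greedy_extension_tail:
  assumes "M \<le> i"
  shows greedy_extension_tail_notin: "greedy_extension \<sigma> M i \<notin> \<sigma> ` {..<M}"
    and greedy_extension_tail_less: "i < j \<Longrightarrow> greedy_extension \<sigma> M i < greedy_extension \<sigma> M j"
proof -
  have infinite: "infinite (- \<sigma> ` {..<M})"
    by (simp add: Compl_eq_Diff_UNIV Diff_infinite_finite)
  have tail: "greedy_extension \<sigma> M k = enumerate (- \<sigma> ` {..<M}) (k - M)" if "M \<le> k" for k
    using that by (simp add: greedy_extension_def)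
  show "greedy_extension \<sigma> M i \<notin> \<sigma> ` {..<M}"
    using enumerate_in_set[OF infinite] tail[OF assms] by simp
  show "greedy_extension \<sigma> M i < greedy_extension \<sigma> M j" if "i < j"
    using enumerate_mono[OF _ infinite, of "i - M" "j - M"] tail[OF assms] tail[of j] that assms
    by simp
qed

lemma inj_greedy_extension:
  assumes "inj_on \<sigma> {..<M}"
  shows "inj (greedy_extension \<sigma> M)"
proof -
  have "greedy_extension \<sigma> M i \<noteq> greedy_extension \<sigma> M j" if "i < j" for i j
  proof (cases "j < M")
    case True
    then show ?thesis
      using that assms by (auto simp: greedy_extension_def inj_on_def)
  next
    case False
    show ?thesis
    proof (cases "i < M")
      case True
      then have "greedy_extension \<sigma> M i \<in> \<sigma> ` {..<M}"
        by (simp add: greedy_extension_def)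
      then show ?thesis
        using False greedy_extension_tail_notin[of M j \<sigma>] by auto
    qed (use that greedy_extension_tail_less[of M i j \<sigma>] in simp)
  qed
  then show ?thesis
    by (metis injI linorder_neqE_nat)
qed

lemma coef_greedy_extension:
  assumes "basic_sequence e" and "inj_on \<sigma> {..<M}"
  shows "coef e (greedy_extension \<sigma> M i) (\<Sum>k<M. a k *\<^sub>R e (\<sigma> k)) = (if i < M then a i else 0)"
  using greedy_extension_tail_notin[of M i \<sigma>] assms
  by (auto simp: coef_sum_reindex greedy_extension_def the_inv_into_f_f)

lemma natural_greedy_ordering_greedy_extension:
  assumes "basic_sequence e" and "inj_on \<sigma> {..<M}"
    and decreasing: "\<And>i j. i < j \<Longrightarrow> j < M \<Longrightarrow> \<bar>a j\<bar> < \<bar>a i\<bar>"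
    and nonzero: "\<And>k. k < M \<Longrightarrow> a k \<noteq> 0"
  shows "natural_greedy_ordering e (\<Sum>k<M. a k *\<^sub>R e (\<sigma> k)) (greedy_extension \<sigma> M)"
  unfolding natural_greedy_ordering_def
proof (intro conjI allI impI)
  show "inj (greedy_extension \<sigma> M)"
    using assms(2) by (rule inj_greedy_extension)
  have "\<sigma> k = greedy_extension \<sigma> M k" if "k < M" for k
    using that by (simp add: greedy_extension_def)
  then have "\<sigma> ` {..<M} \<subseteq> range (greedy_extension \<sigma> M)"
    by auto
  then show "{n. coef e n (\<Sum>k<M. a k *\<^sub>R e (\<sigma> k)) \<noteq> 0} \<subseteq> range (greedy_extension \<sigma> M)"
    using assms(1,2) by (auto simp: coef_sum_reindex split: if_splits)
  fix i j :: nat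
  assume "i < j"
  then show "\<bar>coef e (greedy_extension \<sigma> M j) (\<Sum>k<M. a k *\<^sub>R e (\<sigma> k))\<bar>
        < \<bar>coef e (greedy_extension \<sigma> M i) (\<Sum>k<M. a k *\<^sub>R e (\<sigma> k))\<bar> \<or>
      \<bar>coef e (greedy_extension \<sigma> M i) (\<Sum>k<M. a k *\<^sub>R e (\<sigma> k))\<bar>
        = \<bar>coef e (greedy_extension \<sigma> M j) (\<Sum>k<M. a k *\<^sub>R e (\<sigma> k))\<bar> \<and>
      greedy_extension \<sigma> M i < greedy_extension \<sigma> M j"
    using decreasing[of i j] nonzero[of i] greedy_extension_tail_less[of M i j \<sigma>]
    by (simp add: coef_greedy_extension[OF assms(1,2)])
qed

lemma greedy_sum_greedy_extension:
  assumes "basic_sequence e" and "inj_on \<sigma> {..<M}" and "j \<le> M"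
  shows "greedy_sum e (greedy_extension \<sigma> M) j (\<Sum>k<M. a k *\<^sub>R e (\<sigma> k)) = (\<Sum>k<j. a k *\<^sub>R e (\<sigma> k))"
  unfolding greedy_sum_def
proof (rule sum.cong)
  fix k
  assume "k \<in> {..<j}"
  then have "k < M"
    using assms(3) by simp
  then show "coef e (greedy_extension \<sigma> M k) (\<Sum>k<M. a k *\<^sub>R e (\<sigma> k)) *\<^sub>R e (greedy_extension \<sigma> M k)
      = a k *\<^sub>R e (\<sigma> k)"
    by (simp add: coef_greedy_extension[OF assms(1,2)]) (simp add: greedy_extension_def)
qed simp

lemma natural_greedy_ordering_scaleR:
  assumes "basic_sequence e" and "x \<in> clspan e" and "0 < c"
    and "natural_greedy_ordering e x \<rho>"
  shows "natural_greedy_ordering e (c *\<^sub>R x) \<rho>"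
  using assms by (simp add: natural_greedy_ordering_def coef_scaleR abs_mult)

lemma greedy_max_scaleR:
  assumes "basic_sequence e" and "x \<in> clspan e" and "0 \<le> c"
  shows "greedy_max e \<rho> m (c *\<^sub>R x) = c *\<^sub>R greedy_max e \<rho> m x"
proof -
  have "greedy_sum e \<rho> k (c *\<^sub>R x) = c *\<^sub>R greedy_sum e \<rho> k x" for k
    using assms(1,2) by (simp add: greedy_sum_def coef_scaleR scaleR_sum_right)
  then show ?thesis
    using assms(3) by (simp add: greedy_max_def abs_join_scaleR)
qed

lemma uqg_bound_uqg_constant:
  assumes "basic_sequence e" and "uqg_bound e C"
  shows "uqg_bound e (uqg_constant e)"
  unfolding uqg_bound_def
proof (intro ballI allI impI)
  fix x \<rho> m
  assume x: "x \<in> clspan e" and \<rho>: "natural_greedy_ordering e x \<rho>"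
  show "norm (greedy_max e \<rho> m x) \<le> uqg_constant e * norm x"
  proof (cases "x = 0")
    case True
    then show ?thesis
      using greedy_max_scaleR[OF assms(1) x, of 0] by simp
  next
    case False
    define u where "u = (1 / norm x) *\<^sub>R x"
    have u: "u \<in> clspan e" "norm u = 1" "natural_greedy_ordering e u \<rho>"
      using False x \<rho> by (simp_all add: u_def scaleR_in_clspan natural_greedy_ordering_scaleR assms(1))
    have "x = norm x *\<^sub>R u"
      using False by (simp add: u_def)
    then have "greedy_max e \<rho> m x = norm x *\<^sub>R greedy_max e \<rho> m u"
      by (metis greedy_max_scaleR[OF assms(1) u(1) norm_ge_zero])
    moreover have "norm (greedy_max e \<rho> m u) \<le> uqg_constant e"
      unfolding uqg_constant_def
    proof (rule cSup_upper)
      show "norm (greedy_max e \<rho> m u) \<in> {norm (greedy_max e \<rho> m x) |x \<rho> m.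
          x \<in> clspan e \<and> norm x = 1 \<and> natural_greedy_ordering e x \<rho>}"
        using u by blast
      show "bdd_above {norm (greedy_max e \<rho> m x) |x \<rho> m.
          x \<in> clspan e \<and> norm x = 1 \<and> natural_greedy_ordering e x \<rho>}"
        using assms(2) unfolding uqg_bound_def bdd_above_def by force
    qed
    ultimately show ?thesis
      using mult_right_mono[of "norm (greedy_max e \<rho> m u)" "uqg_constant e" "norm x"]
      by (simp add: mult.commute)
  qed
qed

section \<open>Joins of partial sums\<close>

lemma norm_abs_join_decreasing_le:
  assumes "basic_sequence e" and "uqg_bound e C" and "inj_on \<sigma> {..<M}"
    and "\<And>i j. i < j \<Longrightarrow> j < M \<Longrightarrow> \<bar>a j\<bar> < \<bar>a i\<bar>"
    and "\<And>k. k < M \<Longrightarrow> a k \<noteq> 0"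
  shows "norm (abs_join (\<lambda>j. \<Sum>k<j. a k *\<^sub>R e (\<sigma> k)) M) \<le> C * norm (\<Sum>k<M. a k *\<^sub>R e (\<sigma> k))"
proof -
  have "abs_join (\<lambda>j. \<Sum>k<j. a k *\<^sub>R e (\<sigma> k)) M
      = greedy_max e (greedy_extension \<sigma> M) M (\<Sum>k<M. a k *\<^sub>R e (\<sigma> k))"
    unfolding greedy_max_def using assms(1,3)
    by (intro abs_join_cong) (simp add: greedy_sum_greedy_extension)
  moreover have "natural_greedy_ordering e (\<Sum>k<M. a k *\<^sub>R e (\<sigma> k)) (greedy_extension \<sigma> M)"
    using assms(1,3-5) by (rule natural_greedy_ordering_greedy_extension)
  moreover have "(\<Sum>k<M. a k *\<^sub>R e (\<sigma> k)) \<in> clspan e"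
    by (rule sum_in_clspan)
  ultimately show ?thesis
    using assms(2) unfolding uqg_bound_def by simp
qed

lemma norm_abs_join_unimodular_le:
  assumes "basic_sequence e" and "uqg_bound e C" and "inj_on \<sigma> {..<M}"
    and "\<And>k. k < M \<Longrightarrow> \<bar>s k\<bar> = 1"
  shows "norm (abs_join (\<lambda>j. \<Sum>k<j. s k *\<^sub>R e (\<sigma> k)) M) \<le> C * norm (\<Sum>k<M. s k *\<^sub>R e (\<sigma> k))"
proof -
  define a where "a d k = (1 + real (M - k) * d) * s k" for d k
  have perturbed: "norm (abs_join (\<lambda>j. \<Sum>k<j. a d k *\<^sub>R e (\<sigma> k)) M)
      \<le> C * norm (\<Sum>k<M. a d k *\<^sub>R e (\<sigma> k))" if "0 < d" for d
  proof (rule norm_abs_join_decreasing_le[OF assms(1-3)])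
    show "\<bar>a d j\<bar> < \<bar>a d i\<bar>" if "i < j" "j < M" for i j
      using \<open>0 < d\<close> that assms(4)[of i] assms(4)[of j] by (simp add: a_def abs_mult)
    show "a d k \<noteq> 0" if "k < M" for k
    proof -
      have "0 < 1 + real (M - k) * d"
        using \<open>0 < d\<close> by (intro add_pos_nonneg) simp_all
      then show ?thesis
        using that assms(4)[of k] by (auto simp: a_def)
    qed
  qed
  have partial_sums: "((\<lambda>d. \<Sum>k<j. a d k *\<^sub>R e (\<sigma> k)) \<longlongrightarrow> (\<Sum>k<j. s k *\<^sub>R e (\<sigma> k))) (at_right 0)" for j
  proof -
    have "((\<lambda>d. \<Sum>k<j. a d k *\<^sub>R e (\<sigma> k)) \<longlongrightarrow> (\<Sum>k<j. a 0 k *\<^sub>R e (\<sigma> k))) (at_right 0)"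
      unfolding a_def by (intro tendsto_intros)
    then show ?thesis
      by (simp add: a_def)
  qed
  show ?thesis
  proof (rule tendsto_le[OF trivial_limit_at_right_real])
    show "((\<lambda>d. C * norm (\<Sum>k<M. a d k *\<^sub>R e (\<sigma> k))) \<longlongrightarrow> C * norm (\<Sum>k<M. s k *\<^sub>R e (\<sigma> k))) (at_right 0)"
      by (intro tendsto_intros partial_sums)
    show "((\<lambda>d. norm (abs_join (\<lambda>j. \<Sum>k<j. a d k *\<^sub>R e (\<sigma> k)) M))
        \<longlongrightarrow> norm (abs_join (\<lambda>j. \<Sum>k<j. s k *\<^sub>R e (\<sigma> k)) M)) (at_right 0)"
      by (intro tendsto_intros partial_sums)
    show "\<forall>\<^sub>F d in at_right 0. norm (abs_join (\<lambda>j. \<Sum>k<j. a d k *\<^sub>R e (\<sigma> k)) M)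
        \<le> C * norm (\<Sum>k<M. a d k *\<^sub>R e (\<sigma> k))"
      using eventually_at_right_less by (rule eventually_mono) (rule perturbed)
  qed
qed

lemma norm_abs_join_prefix_sums_le:
  assumes "basic_sequence e" and "uqg_bound e C" and "distinct l" and "inj_on n (set l)"
    and "\<And>i. i \<in> set l \<Longrightarrow> \<bar>w i\<bar> = 1"
  shows "norm (abs_join (\<lambda>t. \<Sum>i\<leftarrow>take t l. w i *\<^sub>R e (n i)) (length l))
    \<le> C * norm (\<Sum>i\<leftarrow>l. w i *\<^sub>R e (n i))"
proof -
  have prefix: "(\<Sum>i\<leftarrow>take t l. w i *\<^sub>R e (n i)) = (\<Sum>k<t. w (l ! k) *\<^sub>R e (n (l ! k)))"
    if "t \<le> length l" for t
    using that by (simp add: sum_list_sum_nth min_def atLeast0LessThan)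
  have "inj_on (\<lambda>k. n (l ! k)) {..<length l}"
  proof (rule inj_onI)
    fix x y
    assume "x \<in> {..<length l}" "y \<in> {..<length l}" "n (l ! x) = n (l ! y)"
    moreover from this have "l ! x = l ! y"
      by (intro inj_onD[OF assms(4)]) auto
    ultimately show "x = y"
      using assms(3) by (simp add: nth_eq_iff_index_eq)
  qed
  then have "norm (abs_join (\<lambda>j. \<Sum>k<j. w (l ! k) *\<^sub>R e (n (l ! k))) (length l))
      \<le> C * norm (\<Sum>k<length l. w (l ! k) *\<^sub>R e (n (l ! k)))"
    using assms(5) by (intro norm_abs_join_unimodular_le[OF assms(1,2)]) auto
  moreover have "abs_join (\<lambda>t. \<Sum>i\<leftarrow>take t l. w i *\<^sub>R e (n i)) (length l)
      = abs_join (\<lambda>j. \<Sum>k<j. w (l ! k) *\<^sub>R e (n (l ! k))) (length l)"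
    by (intro abs_join_cong) (simp add: prefix)
  ultimately show ?thesis
    using prefix[of "length l"] by simp
qed

lemma norm_abs_join_filtered_partial_sums_le:
  assumes "basic_sequence e" and "uqg_bound e C" and "inj_on n {1..m}"
    and "\<forall>i \<in> {1..m}. \<bar>w i\<bar> = 1"
  shows "norm (abs_join (\<lambda>j. \<Sum>i\<in>{i\<in>{1..j}. Q i}. w i *\<^sub>R e (n i)) m)
    \<le> C * norm (\<Sum>i=1..m. w i *\<^sub>R e (n i))"
proof -
  define l where "l = filter Q [1..<Suc m] @ filter (\<lambda>i. \<not> Q i) [1..<Suc m]"
  define B where "B = abs_join (\<lambda>t. \<Sum>i\<leftarrow>take t l. w i *\<^sub>R e (n i)) (length l)"
  have l: "distinct l" "set l = {1..m}" "length l = m"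
    using sum_length_filter_compl[of Q "[1..<Suc m]"] by (auto simp: l_def)
  have "lat_abs (\<Sum>i\<in>{i\<in>{1..j}. Q i}. w i *\<^sub>R e (n i)) \<le> B" if "j \<le> m" for j
  proof -
    define t where "t = length (filter Q [1..<Suc j])"
    have "[1..<Suc m] = [1..<Suc j] @ [Suc j..<Suc m]"
      using upt_add_eq_append[of 1 "Suc j" "m - j"] that by simp
    then have "take t l = filter Q [1..<Suc j]"
      by (simp add: l_def t_def)
    then have sum_eq: "(\<Sum>i\<in>{i\<in>{1..j}. Q i}. w i *\<^sub>R e (n i)) = (\<Sum>i\<leftarrow>take t l. w i *\<^sub>R e (n i))"
      by (simp add: sum_list_distinct_conv_sum_set atLeastLessThanSuc_atLeastAtMost del: upt_Suc)
    have "t \<le> length l"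
      using length_filter_le[of Q "[1..<Suc j]"] that l(3) by (simp add: t_def del: upt_Suc)
    then show ?thesis
      unfolding sum_eq B_def
      using abs_join_upper[of t "length l" "\<lambda>t. \<Sum>i\<leftarrow>take t l. w i *\<^sub>R e (n i)"]
      by (cases "t = 0") (simp_all add: abs_join_nonneg lat_abs_eq_self)
  qed
  then have "abs_join (\<lambda>j. \<Sum>i\<in>{i\<in>{1..j}. Q i}. w i *\<^sub>R e (n i)) m \<le> B"
    by (intro abs_join_least) (auto simp: B_def abs_join_nonneg)
  then have "norm (abs_join (\<lambda>j. \<Sum>i\<in>{i\<in>{1..j}. Q i}. w i *\<^sub>R e (n i)) m) \<le> norm B"
    by (intro norm_mono_nonneg abs_join_nonneg)
  also have "norm B \<le> C * norm (\<Sum>i=1..m. w i *\<^sub>R e (n i))"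
    using norm_abs_join_prefix_sums_le[OF assms(1,2) l(1)] assms(3,4) l
    by (simp add: B_def sum_list_distinct_conv_sum_set)
  finally show ?thesis .
qed

lemma sum_split_signs:
  fixes g :: "'a \<Rightarrow> 'b::ab_group_add"
  assumes "finite A" and "\<And>i. i \<in> A \<Longrightarrow> f i = (if Q i then g i else - g i)"
  shows "sum f A = sum g {i\<in>A. Q i} - sum g {i\<in>A. \<not> Q i}"
proof -
  have sets: "A \<inter> {i. Q i} = {i\<in>A. Q i}" "A \<inter> - {i. Q i} = {i\<in>A. \<not> Q i}"
    by auto
  have "sum f A = sum g (A \<inter> {i. Q i}) + sum (\<lambda>i. - g i) (A \<inter> - {i. Q i})"
    using assms by (simp add: sum.If_cases[symmetric] cong: sum.cong)
  then show ?thesis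
    unfolding sets by (simp add: sum_negf)
qed

lemma norm_abs_join_sign_change_le:
  assumes "basic_sequence e" and "uqg_bound e C" and "inj_on n {1..m}"
    and "\<forall>i \<in> {1..m}. \<bar>v i\<bar> = 1" and "\<forall>i \<in> {1..m}. \<bar>w i\<bar> = 1"
  shows "norm (abs_join (\<lambda>k. \<Sum>i=1..k. v i *\<^sub>R e (n i)) m)
    \<le> 2 * C * norm (\<Sum>i=1..m. w i *\<^sub>R e (n i))"
proof -
  define Q where "Q i \<longleftrightarrow> v i = w i" for i
  have signs: "v i = (if Q i then w i else - w i)" if "i \<in> {1..m}" for i
  proof -
    have "\<bar>v i\<bar> = 1" "\<bar>w i\<bar> = 1"
      using that assms(4,5) by auto
    then show ?thesis
      unfolding Q_def by (auto simp: abs_if split: if_splits)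
  qed
  define J where "J P = abs_join (\<lambda>j. \<Sum>i\<in>{i\<in>{1..j}. P i}. w i *\<^sub>R e (n i)) m" for P
  have "lat_abs (\<Sum>i=1..k. v i *\<^sub>R e (n i)) \<le> J Q + J (\<lambda>i. \<not> Q i)" if "k \<in> {1..m}" for k
  proof -
    have split: "(\<Sum>i=1..k. v i *\<^sub>R e (n i))
        = (\<Sum>i\<in>{i\<in>{1..k}. Q i}. w i *\<^sub>R e (n i)) - (\<Sum>i\<in>{i\<in>{1..k}. \<not> Q i}. w i *\<^sub>R e (n i))"
      using that signs by (intro sum_split_signs) auto
    show ?thesis
      unfolding split J_def by (intro lat_abs_diff_le abs_join_upper that)
  qed
  then have "abs_join (\<lambda>k. \<Sum>i=1..k. v i *\<^sub>R e (n i)) m \<le> J Q + J (\<lambda>i. \<not> Q i)"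
    by (intro abs_join_least) (simp_all add: J_def abs_join_nonneg add_nonneg_nonneg)
  then have "norm (abs_join (\<lambda>k. \<Sum>i=1..k. v i *\<^sub>R e (n i)) m) \<le> norm (J Q) + norm (J (\<lambda>i. \<not> Q i))"
    by (meson abs_join_nonneg norm_mono_nonneg norm_triangle_ineq order_trans)
  also have "\<dots> \<le> 2 * C * norm (\<Sum>i=1..m. w i *\<^sub>R e (n i))"
    using norm_abs_join_filtered_partial_sums_le[OF assms(1-3,5), of Q]
      norm_abs_join_filtered_partial_sums_le[OF assms(1-3,5), of "\<lambda>i. \<not> Q i"]
    unfolding J_def by linarith
  finally show ?thesis .
qed

theorem proposition3p21:
  fixes e :: "nat \<Rightarrow> 'a::banach_lattice"
    and n :: "nat \<Rightarrow> nat" and \<epsilon> :: "nat \<Rightarrow> real" and m :: nat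
  assumes "basic_sequence e" and "semi_normalized e"
    and "\<exists>C. uqg_bound e C"
    and "inj_on n {1..m}"
    and "\<forall>i \<in> {1..m}. \<epsilon> i = 1 \<or> \<epsilon> i = -1"
  shows "norm (abs_join (\<lambda>k. \<Sum>i=1..k. e (n i)) m)
           \<le> uqg_constant e * norm (\<Sum>i=1..m. e (n i)) \<and>
         inverse (2 * uqg_constant e) * norm (abs_join (\<lambda>k. \<Sum>i=1..k. e (n i)) m)
           \<le> norm (\<Sum>i=1..m. \<epsilon> i *\<^sub>R e (n i)) \<and>
         norm (\<Sum>i=1..m. \<epsilon> i *\<^sub>R e (n i))
           \<le> norm (abs_join (\<lambda>k. \<Sum>i=1..k. \<epsilon> i *\<^sub>R e (n i)) m) \<and>
         norm (abs_join (\<lambda>k. \<Sum>i=1..k. \<epsilon> i *\<^sub>R e (n i)) m)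
           \<le> 2 * uqg_constant e * norm (\<Sum>i=1..m. e (n i))"
proof -
  have C: "uqg_bound e (uqg_constant e)"
    using assms(1,3) uqg_bound_uqg_constant by blast
  have signs: "\<forall>i \<in> {1..m}. \<bar>\<epsilon> i\<bar> = 1"
    using assms(5) by auto
  have ones: "\<forall>i \<in> {1..m}. \<bar>1::real\<bar> = 1"
    by simp
  have "{i \<in> {1..k}. True} = {1..k}" for k :: nat
    by auto
  then have part_i: "norm (abs_join (\<lambda>k. \<Sum>i=1..k. e (n i)) m) \<le> uqg_constant e * norm (\<Sum>i=1..m. e (n i))"
    using norm_abs_join_filtered_partial_sums_le[OF assms(1) C assms(4) ones, of "\<lambda>_. True"]
    by (simp only: scaleR_one)
  have lower: "norm (abs_join (\<lambda>k. \<Sum>i=1..k. e (n i)) m)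
      \<le> 2 * uqg_constant e * norm (\<Sum>i=1..m. \<epsilon> i *\<^sub>R e (n i))"
    using norm_abs_join_sign_change_le[OF assms(1) C assms(4) ones signs] by simp
  then have "inverse (2 * uqg_constant e) * norm (abs_join (\<lambda>k. \<Sum>i=1..k. e (n i)) m)
      \<le> norm (\<Sum>i=1..m. \<epsilon> i *\<^sub>R e (n i))"
  proof (cases "uqg_constant e > 0")
    case False
    then show ?thesis
      by (intro order_trans[OF mult_nonpos_nonneg]) simp_all
  qed (simp add: field_simps)
  moreover have "norm (\<Sum>i=1..m. \<epsilon> i *\<^sub>R e (n i)) \<le> norm (abs_join (\<lambda>k. \<Sum>i=1..k. \<epsilon> i *\<^sub>R e (n i)) m)"
  proof (cases "m = 0")
    case False
    then show ?thesis
      by (intro norm_le_if_lat_abs_le abs_join_upper) simp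
  qed simp
  moreover have "norm (abs_join (\<lambda>k. \<Sum>i=1..k. \<epsilon> i *\<^sub>R e (n i)) m)
      \<le> 2 * uqg_constant e * norm (\<Sum>i=1..m. e (n i))"
    using norm_abs_join_sign_change_le[OF assms(1) C assms(4) signs ones] by simp
  ultimately show ?thesis
    using part_i by blast
qed

end
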